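(* Let $s\in [n]$ and $S_-=\sum_{m=1}^n \sigma_m^-$ on $(\mathbb{C}^2)^{\otimes n}$. Then $S_-^s$ has the bond dimension $s+1$ MPO representation \[ \langle i_1\cdots i_n|S_-^s|j_1\cdots j_n\rangle=\mathrm{tr}\big((\tilde O_s)_{i_1,j_1}\cdots(\tilde O_s)_{i_n,j_n}\tilde X_s\big)\quad\text{for all }i,j\in\{0,1\}^n, \] where the virtual space $\mathbb{C}^{s+1}$ is that of a spin-$s/2$ with orthonormal basis $\{|\tfrac s2,m\rangle: m=-\tfrac s2,\dots,\tfrac s2\}$, the boundary tensor is $\tilde{X}_s=|\tfrac{s}{2},-\tfrac{s}{2}\rangle\langle\tfrac{s}{2},\tfrac{s}{2}|$, and $(\tilde{O}_s)_{0,0}=(\tilde{O}_s)_{1,1}=I$, $(\tilde{O}_s)_{1,0}=0$, $(\tilde{O}_s)_{0,1}=J_+$. In particular, the states $|\Psi_s\rangle=S_-^s|\Psi\rangle$ have an MPS representation $|\Psi_s\rangle=|\Psi(\tilde{O}_s\diamond A,\tilde{X}_s\otimes X,n)\rangle$ with bond dimension $2(s+1)$.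
   Context: $\sigma^-_m=|0\rangle\langle1|$ acting on qubit $m$. $J_+$ is the spin raising operator on the spin-$j$ representation ($j=s/2$): $J_+|j,m\rangle=\sqrt{j(j+1)-m(m+1)}\,|j,m+1\rangle$ for $m<j$, $J_+|j,j\rangle=0$. With $\omega=e^{2\pi i/n}$, the one-magnon state $|\Psi\rangle=\overline{\omega}\sum_{r=1}^n\omega^r\sigma_r^-|1\rangle^{\otimes n}$ equals the MPS $|\Psi(A,X,n)\rangle=\sum_{i_1,\dots,i_n}\mathrm{tr}(A_{i_1}\cdots A_{i_n}X)|i_1\cdots i_n\rangle$ with $A_0=|1\rangle\langle0|$, $A_1=|0\rangle\langle0|+\omega|1\rangle\langle1|$, $X=|0\rangle\langle1|$. For an MPO tensor $O=\{O_{i,j}\}_{i,j\in\{0,1\}}$ and MPS tensor $A$, $O\diamond A$ is the MPS tensor $(O\diamond A)_i=\sum_{k}O_{i,k}\otimes A_k$. *)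

theory Defs
  imports Complex_Main "Jordan_Normal_Form.Matrix"
begin

(* Computational basis strings of n qubits: lists i = [i_1,...,i_n] with entries in {0,1}.
   Qubit m (1 <= m <= n) is the list entry with index m - 1. *)
definition bstrings :: "nat \<Rightarrow> nat list set" where
  "bstrings n = {xs. length xs = n \<and> set xs \<subseteq> {0,1}}"

(* Operators on (C^2)^{\<otimes> n} given by their matrix elements <i|O|j>, i,j in bstrings n *)
type_synonym qop = "nat list \<Rightarrow> nat list \<Rightarrow> complex"

definition op_id :: qop where
  "op_id i j = (if i = j then 1 else 0)"

definition op_mult :: "nat \<Rightarrow> qop \<Rightarrow> qop \<Rightarrow> qop" where
  "op_mult n P Q i j = (\<Sum>k\<in>bstrings n. P i k * Q k j)"

primrec op_pow :: "nat \<Rightarrow> qop \<Rightarrow> nat \<Rightarrow> qop" where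
  "op_pow n P 0 = op_id"
| "op_pow n P (Suc k) = op_mult n P (op_pow n P k)"

definition op_apply :: "nat \<Rightarrow> qop \<Rightarrow> (nat list \<Rightarrow> complex) \<Rightarrow> (nat list \<Rightarrow> complex)" where
  "op_apply n P psi i = (\<Sum>j\<in>bstrings n. P i j * psi j)"

(* sigma^-_m = |0><1| acting on qubit m (1 <= m <= n), identity elsewhere *)
definition sigma_minus :: "nat \<Rightarrow> qop" where
  "sigma_minus m i j =
     (if i ! (m - 1) = 0 \<and> j ! (m - 1) = 1 \<and> length i = length j \<and>
         (\<forall>k < length i. k \<noteq> m - 1 \<longrightarrow> i ! k = j ! k) then 1 else 0)"

definition S_minus :: "nat \<Rightarrow> qop" where
  "S_minus n i j = (\<Sum>m = 1..n. sigma_minus m i j)"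

(* Virtual spin-s/2 space C^{s+1}: basis index k (0 <= k <= s) stands for |s/2, k - s/2>. *)
definition J_plus :: "nat \<Rightarrow> complex mat" where
  "J_plus s = mat (s+1) (s+1) (\<lambda>(a,b).
     (let j = real s / 2; m = real b - real s / 2 in
      if a = b + 1 then complex_of_real (sqrt (j * (j + 1) - m * (m + 1))) else 0))"

(* \<tilde>X_s = |s/2,-s/2><s/2,s/2| *)
definition Xt :: "nat \<Rightarrow> complex mat" where
  "Xt s = mat (s+1) (s+1) (\<lambda>(a,b). if a = 0 \<and> b = s then 1 else 0)"

definition Ot :: "nat \<Rightarrow> nat \<Rightarrow> nat \<Rightarrow> complex mat" where
  "Ot s i j = (if i = j then 1\<^sub>m (s+1)
               else if i = 0 \<and> j = 1 then J_plus s else 0\<^sub>m (s+1) (s+1))"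

definition mat_trace :: "complex mat \<Rightarrow> complex" where
  "mat_trace M = (\<Sum>k < dim_row M. M $$ (k,k))"

primrec mat_prod_list :: "nat \<Rightarrow> complex mat list \<Rightarrow> complex mat" where
  "mat_prod_list d [] = 1\<^sub>m d"
| "mat_prod_list d (M # Ms) = M * mat_prod_list d Ms"

definition kron :: "complex mat \<Rightarrow> complex mat \<Rightarrow> complex mat" where
  "kron P Q = mat (dim_row P * dim_row Q) (dim_col P * dim_col Q)
     (\<lambda>(a,b). P $$ (a div dim_row Q, b div dim_col Q) * Q $$ (a mod dim_row Q, b mod dim_col Q))"

definition mps :: "nat \<Rightarrow> (nat \<Rightarrow> complex mat) \<Rightarrow> complex mat \<Rightarrow> nat list \<Rightarrow> complex" where
  "mps D A X i = mat_trace (mat_prod_list D (map A i) * X)"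

definition diamond :: "(nat \<Rightarrow> nat \<Rightarrow> complex mat) \<Rightarrow> (nat \<Rightarrow> complex mat) \<Rightarrow> nat \<Rightarrow> complex mat" where
  "diamond Op A i = kron (Op i 0) (A 0) + kron (Op i 1) (A 1)"

definition omega :: "nat \<Rightarrow> complex" where
  "omega n = exp (2 * pi * \<i> / of_nat n)"

definition all_ones :: "nat \<Rightarrow> nat list \<Rightarrow> complex" where
  "all_ones n i = (if i = replicate n 1 then 1 else 0)"

definition magnon :: "nat \<Rightarrow> nat list \<Rightarrow> complex" where
  "magnon n i = cnj (omega n) * (\<Sum>r = 1..n. omega n ^ r * op_apply n (sigma_minus r) (all_ones n) i)"

definition A_mag :: "nat \<Rightarrow> nat \<Rightarrow> complex mat" where
  "A_mag n k = (if k = 0 then mat 2 2 (\<lambda>(a,b). if a = 1 \<and> b = 0 then 1 else 0)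
                else mat 2 2 (\<lambda>(a,b). if a = 0 \<and> b = 0 then 1
                                       else if a = 1 \<and> b = 1 then omega n else 0))"

definition X_mag :: "complex mat" where
  "X_mag = mat 2 2 (\<lambda>(a,b). if a = 0 \<and> b = 1 then 1 else 0)"

end

theory Submission
  imports Defs
begin

(*
  Both sides of the first identity equal s! if i \<le> j componentwise and i, j differ in exactly
  s positions, and 0 otherwise. For S_-^s this counts the s! orders in which the s flipped
  qubits can be lowered. For the MPO, Ot forbids i_m > j_m and contributes one factor J_+ per
  flipped position, so the chain multiplies to J_+^c; the boundary Xt picks out its entry
  <s/2,s/2|J_+^c|s/2,-s/2>, which vanishes unless c = s and then equals
  prod_{t<s} sqrt((s-t)(t+1)) = s!.
  The MPS statement follows from the first one, the MPS form of the magnon, and the fact that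
  multiplying out the Kronecker products in Ot \<diamond> A turns an MPO applied to an MPS into
  the MPS with tensor Ot \<diamond> A and boundary Xt \<otimes> X.
*)

lemma mat_trace_mult_comm:
  assumes "A \<in> carrier_mat n m" "B \<in> carrier_mat m n"
  shows "mat_trace (A * B) = mat_trace (B * A)"
proof -
  have "mat_trace (A * B) = (\<Sum>i<n. \<Sum>k<m. A $$ (i,k) * B $$ (k,i))"
    using assms unfolding mat_trace_def by (simp add: scalar_prod_def atLeast0LessThan)
  also have "\<dots> = (\<Sum>k<m. \<Sum>i<n. B $$ (k,i) * A $$ (i,k))"
    by (subst sum.swap) (simp add: mult.commute)
  also have "\<dots> = mat_trace (B * A)"
    using assms unfolding mat_trace_def by (simp add: scalar_prod_def atLeast0LessThan)
  finally show ?thesis .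
qed

lemma mat_trace_mult_rotate:
  assumes "M \<in> carrier_mat n n" "Y \<in> carrier_mat n n" "N \<in> carrier_mat n n"
  shows "mat_trace (M * (Y * N)) = mat_trace (N * M * Y)"
proof -
  have "mat_trace (M * (Y * N)) = mat_trace (M * Y * N)" using assms by (simp add: assoc_mult_mat)
  also have "\<dots> = mat_trace (N * (M * Y))" using assms by (intro mat_trace_mult_comm) auto
  also have "\<dots> = mat_trace (N * M * Y)" using assms by (simp add: assoc_mult_mat)
  finally show ?thesis .
qed

lemma mat_trace_add:
  assumes "A \<in> carrier_mat n n" "B \<in> carrier_mat n n"
  shows "mat_trace (A + B) = mat_trace A + mat_trace B"
  using assms unfolding mat_trace_def by (simp add: sum.distrib)

lemma mat_trace_mult_matrix_unit:
  assumes "M \<in> carrier_mat n n" "N \<in> carrier_mat n n"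
    and "\<And>a b. a < n \<Longrightarrow> b < n \<Longrightarrow> N $$ (a,b) = (if a = p \<and> b = q then 1 else 0)"
    and "p < n" "q < n"
  shows "mat_trace (M * N) = M $$ (q, p)"
proof -
  have "mat_trace (M * N) = (\<Sum>k<n. \<Sum>l<n. M $$ (k,l) * N $$ (l,k))"
    using assms unfolding mat_trace_def by (simp add: scalar_prod_def atLeast0LessThan)
  also have "\<dots> = (\<Sum>k<n. \<Sum>l<n. if l = p then (if k = q then M $$ (k,p) else 0) else 0)"
    using assms(3) by (intro sum.cong) auto
  also have "\<dots> = M $$ (q,p)" using assms(4,5) by simp
  finally show ?thesis .
qed

lemma dim_kron [simp]:
  "dim_row (kron P Q) = dim_row P * dim_row Q" "dim_col (kron P Q) = dim_col P * dim_col Q"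
  unfolding kron_def by auto

lemma index_kron:
  assumes "a < dim_row P * dim_row Q" "b < dim_col P * dim_col Q"
  shows "kron P Q $$ (a,b) = P $$ (a div dim_row Q, b div dim_col Q) * Q $$ (a mod dim_row Q, b mod dim_col Q)"
  using assms unfolding kron_def by auto

lemma kron_carrier_mat:
  "P \<in> carrier_mat a b \<Longrightarrow> Q \<in> carrier_mat c d \<Longrightarrow> kron P Q \<in> carrier_mat (a*c) (b*d)"
  by auto

lemma sum_lessThan_mult_div_mod:
  fixes b e :: nat
  shows "(\<Sum>k<b*e. g (k div e) (k mod e)) = (\<Sum>u<b. \<Sum>v<e. g u v)"
proof -
  have "(\<Sum>k<b*e. g (k div e) (k mod e)) = (\<Sum>(u,v)\<in>{..<b} \<times> {..<e}. g u v)"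
  proof (rule sum.reindex_bij_witness[where i = "\<lambda>(u,v). u*e + v" and j = "\<lambda>k. (k div e, k mod e)"])
    fix k assume "k \<in> {..<b*e}"
    moreover from this have "0 < e" by (cases e) auto
    ultimately show "(k div e, k mod e) \<in> {..<b} \<times> {..<e}"
      by (auto simp: less_mult_imp_div_less)
  next
    fix uv :: "nat \<times> nat" assume "uv \<in> {..<b} \<times> {..<e}"
    moreover have "u*e + v < b*e" if "u < b" "v < e" for u v
    proof -
      have "u*e + v < Suc u * e" using that by simp
      also have "\<dots> \<le> b*e" using that by (intro mult_le_mono1) simp
      finally show ?thesis .
    qed
    ultimately show "(case uv of (u,v) \<Rightarrow> u*e + v) \<in> {..<b*e}" by auto
  qed auto
  then show ?thesis by (simp add: sum.cartesian_product)
qed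

lemma kron_mult_kron:
  assumes "P1 \<in> carrier_mat a b" "P2 \<in> carrier_mat b c" "Q1 \<in> carrier_mat d e" "Q2 \<in> carrier_mat e f"
  shows "kron P1 Q1 * kron P2 Q2 = kron (P1 * P2) (Q1 * Q2)"
proof (rule eq_matI)
  fix x y assume "x < dim_row (kron (P1 * P2) (Q1 * Q2))" "y < dim_col (kron (P1 * P2) (Q1 * Q2))"
  then have x: "x < a * d" and y: "y < c * f" using assms by auto
  moreover have "0 < d" using x by (cases d) auto
  moreover have "0 < f" using y by (cases f) auto
  ultimately have "x div d < a" "x mod d < d" "y div f < c" "y mod f < f"
    by (auto simp: less_mult_imp_div_less intro!: mod_less_divisor)
  then have "kron (P1 * P2) (Q1 * Q2) $$ (x,y) =
      (\<Sum>u<b. P1 $$ (x div d, u) * P2 $$ (u, y div f)) * (\<Sum>v<e. Q1 $$ (x mod d, v) * Q2 $$ (v, y mod f))"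
    using assms x y by (simp add: index_kron scalar_prod_def atLeast0LessThan)
  also have "\<dots> = (\<Sum>k<b*e. (P1 $$ (x div d, k div e) * P2 $$ (k div e, y div f)) *
        (Q1 $$ (x mod d, k mod e) * Q2 $$ (k mod e, y mod f)))"
    by (simp add: sum_product sum_lessThan_mult_div_mod[where g = "\<lambda>u v. P1 $$ (x div d, u) * P2 $$ (u, y div f) *
        (Q1 $$ (x mod d, v) * Q2 $$ (v, y mod f))"])
  also have "\<dots> = (kron P1 Q1 * kron P2 Q2) $$ (x,y)"
    using assms x y by (auto simp: index_kron scalar_prod_def atLeast0LessThan mult_ac intro!: sum.cong)
  finally show "(kron P1 Q1 * kron P2 Q2) $$ (x,y) = kron (P1 * P2) (Q1 * Q2) $$ (x,y)" ..
qed (use assms in auto)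

lemma mat_trace_kron:
  assumes "P \<in> carrier_mat a a" "Q \<in> carrier_mat d d"
  shows "mat_trace (kron P Q) = mat_trace P * mat_trace Q"
proof -
  have "mat_trace (kron P Q) = (\<Sum>k<a*d. P $$ (k div d, k div d) * Q $$ (k mod d, k mod d))"
    unfolding mat_trace_def using assms by (intro sum.cong) (auto simp: index_kron)
  also have "\<dots> = mat_trace P * mat_trace Q"
    unfolding mat_trace_def using assms
    by (simp add: sum_lessThan_mult_div_mod[where g = "\<lambda>u v. P $$ (u,u) * Q $$ (v,v)"] sum_product)
  finally show ?thesis .
qed

lemma mat_prod_list_carrier:
  "(\<And>M. M \<in> set Ms \<Longrightarrow> M \<in> carrier_mat d d) \<Longrightarrow> mat_prod_list d Ms \<in> carrier_mat d d"
  by (induction Ms) (auto intro!: mult_carrier_mat)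

lemma finite_bstrings [simp]: "finite (bstrings n)"
proof -
  have "finite {xs. set xs \<subseteq> {0::nat,1} \<and> length xs = n}"
    by (rule finite_lists_length_eq) simp
  then show ?thesis unfolding bstrings_def by (simp add: conj_commute)
qed

lemma bstrings_0: "bstrings 0 = {[]}"
  by (auto simp: bstrings_def)

lemma bstrings_Suc: "bstrings (Suc n) = Cons 0 ` bstrings n \<union> Cons 1 ` bstrings n"
proof
  show "bstrings (Suc n) \<subseteq> Cons 0 ` bstrings n \<union> Cons 1 ` bstrings n"
  proof
    fix xs assume "xs \<in> bstrings (Suc n)"
    then obtain y ys where "xs = y # ys" "y \<in> {0,1}" "ys \<in> bstrings n"
      unfolding bstrings_def by (cases xs) auto
    then show "xs \<in> Cons 0 ` bstrings n \<union> Cons 1 ` bstrings n" by auto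
  qed
qed (auto simp: bstrings_def)

lemma sum_bstrings_Suc:
  "(\<Sum>j\<in>bstrings (Suc n). f j) = (\<Sum>j\<in>bstrings n. f (0#j)) + (\<Sum>j\<in>bstrings n. f (1#j))"
  unfolding bstrings_Suc by (subst sum.union_disjoint) (auto simp: sum.reindex)

lemma length_bstrings: "i \<in> bstrings n \<Longrightarrow> length i = n"
  unfolding bstrings_def by simp

lemma diamond_carrier_mat:
  assumes "\<And>x y. Op x y \<in> carrier_mat d d" "\<And>y. A y \<in> carrier_mat e e"
  shows "diamond Op A x \<in> carrier_mat (d*e) (d*e)"
  unfolding diamond_def using assms by (intro add_carrier_mat kron_carrier_mat)

lemma mat_trace_prod_diamond:
  assumes Op: "\<And>x y. Op x y \<in> carrier_mat d d" and A: "\<And>y. A y \<in> carrier_mat e e"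
    and "Y \<in> carrier_mat d d" "Z \<in> carrier_mat e e"
  shows "mat_trace (mat_prod_list (d*e) (map (diamond Op A) i) * kron Y Z) =
    (\<Sum>j\<in>bstrings (length i). mat_trace (mat_prod_list d (map2 Op i j) * Y) *
        mat_trace (mat_prod_list e (map A j) * Z))"
  using assms(3,4)
proof (induction i arbitrary: Y Z)
  case Nil
  then show ?case by (simp add: bstrings_0 mat_trace_kron)
next
  case (Cons x i)
  let ?R = "mat_prod_list (d*e) (map (diamond Op A) i)"
  let ?YO = "\<lambda>y. Y * Op x y" and ?ZA = "\<lambda>y. Z * A y"
  have R: "?R \<in> carrier_mat (d*e) (d*e)"
    using Op A by (auto intro!: mat_prod_list_carrier diamond_carrier_mat)
  have YO: "?YO y \<in> carrier_mat d d" and ZA: "?ZA y \<in> carrier_mat e e" for y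
    using Op A Cons.prems by auto
  have K: "kron (?YO y) (?ZA y) \<in> carrier_mat (d*e) (d*e)" for y
    using YO ZA by (rule kron_carrier_mat)
  have "kron Y Z * diamond Op A x = kron Y Z * kron (Op x 0) (A 0) + kron Y Z * kron (Op x 1) (A 1)"
    unfolding diamond_def
    by (rule mult_add_distrib_mat[OF kron_carrier_mat[OF Cons.prems] kron_carrier_mat[OF Op A]
          kron_carrier_mat[OF Op A]])
  also have "\<dots> = kron (?YO 0) (?ZA 0) + kron (?YO 1) (?ZA 1)"
    by (simp add: kron_mult_kron[OF Cons.prems(1) Op Cons.prems(2) A])
  finally have expand: "kron Y Z * diamond Op A x = kron (?YO 0) (?ZA 0) + kron (?YO 1) (?ZA 1)" .
  have "mat_trace (mat_prod_list (d*e) (map (diamond Op A) (x#i)) * kron Y Z)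
      = mat_trace (?R * (kron Y Z * diamond Op A x))"
    using mat_trace_mult_rotate[OF R kron_carrier_mat[OF Cons.prems] diamond_carrier_mat[OF Op A]] by simp
  also have "\<dots> = mat_trace (?R * kron (?YO 0) (?ZA 0)) + mat_trace (?R * kron (?YO 1) (?ZA 1))"
    unfolding expand mult_add_distrib_mat[OF R K K]
    by (rule mat_trace_add[OF mult_carrier_mat[OF R K] mult_carrier_mat[OF R K]])
  also have "\<dots> = (\<Sum>j\<in>bstrings (length i).
      mat_trace (mat_prod_list d (map2 Op i j) * ?YO 0) * mat_trace (mat_prod_list e (map A j) * ?ZA 0) +
      mat_trace (mat_prod_list d (map2 Op i j) * ?YO 1) * mat_trace (mat_prod_list e (map A j) * ?ZA 1))"
    by (simp add: Cons.IH[OF YO ZA] sum.distrib)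
  also have "\<dots> = (\<Sum>j\<in>bstrings (length (x#i)). mat_trace (mat_prod_list d (map2 Op (x#i) j) * Y) *
        mat_trace (mat_prod_list e (map A j) * Z))"
  proof -
    have "mat_prod_list d (map2 Op i j) \<in> carrier_mat d d" "mat_prod_list e (map A j) \<in> carrier_mat e e" for j
      using Op A by (auto intro!: mat_prod_list_carrier)
    then show ?thesis
      by (simp add: sum_bstrings_Suc sum.distrib mat_trace_mult_rotate[OF _ Cons.prems(1) Op]
          mat_trace_mult_rotate[OF _ Cons.prems(2) A])
  qed
  finally show ?case .
qed

definition lowering_entry :: "nat \<Rightarrow> nat list \<Rightarrow> nat list \<Rightarrow> complex" where
  "lowering_entry s i j =
     (if (\<forall>m<length i. i!m \<le> j!m) \<and> card {m. m < length i \<and> i!m < j!m} = s then fact s else 0)"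

lemma bstrings_nth: "i \<in> bstrings n \<Longrightarrow> m < n \<Longrightarrow> i!m = 0 \<or> i!m = 1"
  unfolding bstrings_def using nth_mem by fastforce

lemma bstrings_list_update: "i \<in> bstrings n \<Longrightarrow> i[m := 1] \<in> bstrings n"
  unfolding bstrings_def using set_update_subset_insert by fastforce

lemma op_id_eq_lowering_entry_0:
  assumes "i \<in> bstrings n" "j \<in> bstrings n"
  shows "op_id i j = lowering_entry 0 i j"
proof (cases "i = j")
  case False
  have li: "length i = n" "length j = n" using assms by (auto simp: length_bstrings)
  with False obtain m where m: "m < n" "i!m \<noteq> j!m" using nth_equalityI by metis
  have "\<not> (\<forall>m<n. i!m \<le> j!m) \<or> m \<in> {m. m < n \<and> i!m < j!m}" using m by auto
  then have "lowering_entry 0 i j = 0" unfolding lowering_entry_def li by auto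
  then show ?thesis using False by (simp add: op_id_def)
qed (simp add: op_id_def lowering_entry_def)

lemma sigma_minus_Suc:
  assumes "i \<in> bstrings n" "k \<in> bstrings n" "m < n"
  shows "sigma_minus (Suc m) i k = (if k = i[m := 1] \<and> i!m = 0 then 1 else 0)"
proof -
  have "length i = n" "length k = n" using assms by (auto simp: length_bstrings)
  then have "(i!m = 0 \<and> k!m = 1 \<and> length i = length k \<and> (\<forall>q<length i. q \<noteq> m \<longrightarrow> i!q = k!q))
     \<longleftrightarrow> (k = i[m := 1] \<and> i!m = 0)"
    using assms(3) by (auto simp: nth_list_update intro!: nth_equalityI)
  then show ?thesis unfolding sigma_minus_def by simp
qed

lemma sum_sigma_minus_Suc_mult:
  assumes "i \<in> bstrings n" "m < n"
  shows "(\<Sum>k\<in>bstrings n. sigma_minus (Suc m) i k * f k) = (if i!m = 0 then f (i[m := 1]) else 0)"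
proof -
  have "(\<Sum>k\<in>bstrings n. sigma_minus (Suc m) i k * f k) =
        (\<Sum>k\<in>bstrings n. if k = i[m := 1] then (if i!m = 0 then f (i[m := 1]) else 0) else 0)"
    using assms by (intro sum.cong) (auto simp: sigma_minus_Suc)
  also have "\<dots> = (if i!m = 0 then f (i[m := 1]) else 0)"
    using bstrings_list_update[OF assms(1)] by simp
  finally show ?thesis .
qed

lemma lowering_entry_raise:
  assumes i: "i \<in> bstrings n" and j: "j \<in> bstrings n" and m: "m < n"
  defines "D \<equiv> {q. q < n \<and> i!q < j!q}"
  shows "(if i!m = 0 then lowering_entry s (i[m := 1]) j else 0) =
         (if (\<forall>q<n. i!q \<le> j!q) \<and> card D = Suc s \<and> m \<in> D then fact s else 0)"
proof (cases "i!m = 0")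
  case False
  then have "m \<notin> D" using bstrings_nth[OF i m] bstrings_nth[OF j m] unfolding D_def by auto
  then show ?thesis using False by simp
next
  case True
  have li: "length i = n" "length j = n" using i j by (auto simp: length_bstrings)
  have upd_nth: "i[m:=1]!q = (if q = m then 1 else i!q)" for q
    using li m by (simp add: nth_list_update)
  have j_m: "m \<in> D \<longleftrightarrow> j!m = 1" unfolding D_def using True m bstrings_nth[OF j m] by auto
  have below_iff: "(\<forall>q<n. i[m:=1]!q \<le> j!q) \<longleftrightarrow> (\<forall>q<n. i!q \<le> j!q) \<and> m \<in> D"
  proof
    assume h: "\<forall>q<n. i[m:=1]!q \<le> j!q"
    have "j!m = 1" using h m bstrings_nth[OF j m] upd_nth[of m] by fastforce
    moreover have "i!q \<le> j!q" if "q < n" for q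
      using h that True upd_nth[of q] by (cases "q = m") auto
    ultimately show "(\<forall>q<n. i!q \<le> j!q) \<and> m \<in> D" using j_m by blast
  next
    assume h: "(\<forall>q<n. i!q \<le> j!q) \<and> m \<in> D"
    show "\<forall>q<n. i[m:=1]!q \<le> j!q"
    proof (intro allI impI)
      fix q assume "q < n"
      then show "i[m:=1]!q \<le> j!q" using h j_m upd_nth[of q] by auto
    qed
  qed
  have card_iff: "card {q. q < n \<and> i[m:=1]!q < j!q} = s \<longleftrightarrow> card D = Suc s" if "m \<in> D"
  proof -
    have "{q. q < n \<and> i[m:=1]!q < j!q} = D - {m}"
    proof (rule Set.set_eqI)
      fix q show "q \<in> {q. q < n \<and> i[m:=1]!q < j!q} \<longleftrightarrow> q \<in> D - {m}"
        using that j_m upd_nth[of q] unfolding D_def by (cases "q = m") auto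
    qed
    moreover have "finite D" unfolding D_def by simp
    ultimately have "card {q. q < n \<and> i[m:=1]!q < j!q} = card D - 1"
      using that by (simp add: card_Diff_singleton)
    moreover have "card D > 0" using that \<open>finite D\<close> by (auto simp: card_gt_0_iff)
    ultimately show ?thesis by linarith
  qed
  show ?thesis
    unfolding lowering_entry_def length_list_update li below_iff using True card_iff
    by (cases "m \<in> D") simp_all
qed

lemma sum_lessThan_if_mem:
  fixes n :: nat
  assumes "D \<subseteq> {..<n}"
  shows "(\<Sum>m<n. if m \<in> D then c else 0) = of_nat (card D) * c"
proof -
  have "(\<Sum>m\<in>{m\<in>{..<n}. m \<in> D}. c) = (\<Sum>m<n. if m \<in> D then c else 0)"
    by (rule sum.inter_filter) simp
  moreover have "{m\<in>{..<n}. m \<in> D} = D" using assms by blast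
  ultimately show ?thesis by simp
qed

lemma op_pow_S_minus:
  "i \<in> bstrings n \<Longrightarrow> j \<in> bstrings n \<Longrightarrow> op_pow n (S_minus n) s i j = lowering_entry s i j"
proof (induction s arbitrary: i j)
  case 0
  then show ?case by (simp add: op_id_eq_lowering_entry_0)
next
  case (Suc s)
  define D where "D = {q. q < n \<and> i!q < j!q}"
  define below where "below = (\<forall>q<n. i!q \<le> j!q)"
  have li: "length i = n" "length j = n" using Suc.prems by (auto simp: length_bstrings)
  have "op_pow n (S_minus n) (Suc s) i j = (\<Sum>k\<in>bstrings n. S_minus n i k * lowering_entry s k j)"
    using Suc by (simp add: op_mult_def)
  also have "\<dots> = (\<Sum>k\<in>bstrings n. \<Sum>m\<in>{1..n}. sigma_minus m i k * lowering_entry s k j)"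
    by (simp add: S_minus_def sum_distrib_right)
  also have "\<dots> = (\<Sum>m<n. \<Sum>k\<in>bstrings n. sigma_minus (Suc m) i k * lowering_entry s k j)"
    by (subst sum.swap) (simp add: sum.atLeast1_atMost_eq)
  also have "\<dots> = (\<Sum>m<n. if below \<and> card D = Suc s \<and> m \<in> D then fact s else 0)"
    using Suc.prems unfolding D_def below_def
    by (intro sum.cong) (simp_all add: sum_sigma_minus_Suc_mult lowering_entry_raise)
  also have "\<dots> = (if below \<and> card D = Suc s then of_nat (card D) * fact s else 0)"
  proof -
    have "D \<subseteq> {..<n}" by (auto simp: D_def)
    then show ?thesis by (cases "below \<and> card D = Suc s") (auto simp: sum_lessThan_if_mem)
  qed
  also have "\<dots> = lowering_entry (Suc s) i j"
    unfolding lowering_entry_def li D_def below_def by auto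
  finally show ?case .
qed

definition J_plus_coeff :: "nat \<Rightarrow> nat \<Rightarrow> nat \<Rightarrow> complex" where
  "J_plus_coeff s b c = (\<Prod>t\<in>{b..<b+c}. complex_of_real (sqrt ((real s - real t) * (real t + 1))))"

definition J_plus_pow :: "nat \<Rightarrow> nat \<Rightarrow> complex mat" where
  "J_plus_pow s c = mat (s+1) (s+1) (\<lambda>(a,b). if a = b + c then J_plus_coeff s b c else 0)"

lemma J_plus_carrier: "J_plus s \<in> carrier_mat (s+1) (s+1)"
  unfolding J_plus_def by simp

lemma J_plus_pow_carrier: "J_plus_pow s c \<in> carrier_mat (s+1) (s+1)"
  unfolding J_plus_pow_def by simp

lemma J_plus_pow_0: "J_plus_pow s 0 = 1\<^sub>m (s+1)"
  by (rule eq_matI) (auto simp: J_plus_pow_def J_plus_coeff_def)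

lemma index_J_plus:
  assumes "a < s+1" "k < s+1"
  shows "J_plus s $$ (a,k) =
    (if a = k + 1 then complex_of_real (sqrt ((real s - real k) * (real k + 1))) else 0)"
proof -
  have "real s / 2 * (real s / 2 + 1) - (real k - real s / 2) * (real k - real s / 2 + 1)
     = (real s - real k) * (real k + 1)"
    by (simp add: field_simps)
  then show ?thesis unfolding J_plus_def using assms by (simp add: Let_def)
qed

lemma J_plus_mult_J_plus_pow: "J_plus s * J_plus_pow s c = J_plus_pow s (Suc c)"
proof (rule eq_matI)
  fix a b assume "a < dim_row (J_plus_pow s (Suc c))" "b < dim_col (J_plus_pow s (Suc c))"
  then have a: "a < s+1" and b: "b < s+1" by (auto simp: J_plus_pow_def)
  have "(J_plus s * J_plus_pow s c) $$ (a,b) = (\<Sum>k<s+1. J_plus s $$ (a,k) * J_plus_pow s c $$ (k,b))"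
    using a b J_plus_carrier[of s] J_plus_pow_carrier[of s c]
    by (simp add: scalar_prod_def atLeast0LessThan)
  also have "\<dots> = J_plus_pow s (Suc c) $$ (a,b)"
  proof (cases a)
    case 0
    then show ?thesis using a b by (simp add: index_J_plus J_plus_pow_def)
  next
    case (Suc a')
    have "(\<Sum>k<s+1. J_plus s $$ (a,k) * J_plus_pow s c $$ (k,b)) =
      (\<Sum>k<s+1. if k = a' then complex_of_real (sqrt ((real s - real a') * (real a' + 1))) * J_plus_pow s c $$ (a',b) else 0)"
      using a Suc by (intro sum.cong) (auto simp: index_J_plus)
    also have "\<dots> = complex_of_real (sqrt ((real s - real a') * (real a' + 1))) * J_plus_pow s c $$ (a',b)"
      using a Suc by simp
    also have "\<dots> = J_plus_pow s (Suc c) $$ (a,b)"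
      using Suc a b by (auto simp: J_plus_pow_def J_plus_coeff_def prod.atLeastLessThan_Suc mult.commute)
    finally show ?thesis using Suc by simp
  qed
  finally show "(J_plus s * J_plus_pow s c) $$ (a,b) = J_plus_pow s (Suc c) $$ (a,b)" .
qed (simp_all add: J_plus_pow_def J_plus_def)

lemma Ot_carrier: "Ot s i j \<in> carrier_mat (s+1) (s+1)"
  unfolding Ot_def using J_plus_carrier by auto

lemma mat_prod_list_Ot_carrier: "mat_prod_list (s+1) (map2 (Ot s) i j) \<in> carrier_mat (s+1) (s+1)"
  using Ot_carrier[of s, simplified] by (auto intro!: mat_prod_list_carrier)

lemma card_less_Suc_split:
  "card {m. m < Suc l \<and> P m} = (if P 0 then 1 else 0) + card {m. m < l \<and> P (Suc m)}"
proof -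
  have "{m. m < Suc l \<and> P m} = (if P 0 then {0} else {}) \<union> Suc ` {m. m < l \<and> P (Suc m)}"
    by (auto simp: less_Suc_eq_0_disj)
  moreover have "card (Suc ` {m. m < l \<and> P (Suc m)}) = card {m. m < l \<and> P (Suc m)}"
    by (rule card_image) simp
  ultimately show ?thesis by auto
qed

lemma mat_prod_list_Ot:
  assumes "length i = length j" "set i \<subseteq> {0,1}" "set j \<subseteq> {0,1}"
  shows "mat_prod_list (s+1) (map2 (Ot s) i j) =
   (if \<forall>m<length i. i!m \<le> j!m then J_plus_pow s (card {m. m < length i \<and> i!m < j!m})
    else 0\<^sub>m (s+1) (s+1))"
  using assms
proof (induction i arbitrary: j)
  case Nil
  then show ?case by (simp add: J_plus_pow_0)
next
  case (Cons x i)
  then obtain y j' where j: "j = y # j'" by (cases j) auto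
  let ?le = "\<forall>m<length i. i!m \<le> j'!m" and ?c = "card {m. m < length i \<and> i!m < j'!m}"
  have IH: "mat_prod_list (s+1) (map2 (Ot s) i j') = (if ?le then J_plus_pow s ?c else 0\<^sub>m (s+1) (s+1))"
    using Cons j by auto
  note M = mat_prod_list_Ot_carrier[of s i j']
  have le_iff: "(\<forall>m<length (x#i). (x#i)!m \<le> (y#j')!m) \<longleftrightarrow> x \<le> y \<and> ?le"
    by (simp add: All_less_Suc2)
  have card: "card {m. m < length (x#i) \<and> (x#i)!m < (y#j')!m} = (if x < y then 1 else 0) + ?c"
    by (simp add: card_less_Suc_split)
  have "x \<in> {0,1}" "y \<in> {0,1}" using Cons j by auto
  then consider "x = y" | "x = 0" "y = 1" | "x = 1" "y = 0" by auto
  then show ?case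
  proof cases
    case 1
    then show ?thesis unfolding j le_iff card using IH M by (cases ?le) (auto simp: Ot_def)
  next
    case 2
    then show ?thesis unfolding j le_iff card using IH right_mult_zero_mat[OF J_plus_carrier[of s, simplified]]
      by (cases ?le) (auto simp: Ot_def J_plus_mult_J_plus_pow)
  next
    case 3
    then show ?thesis unfolding j le_iff card using M by (simp add: Ot_def)
  qed
qed

lemma real_sqrt_prod: "finite A \<Longrightarrow> sqrt (prod f A) = (\<Prod>t\<in>A. sqrt (f t))"
  by (induction rule: finite_induct) (simp_all add: real_sqrt_mult)

lemma J_plus_coeff_0_self: "J_plus_coeff s 0 s = fact s"
proof -
  have "(\<Prod>t\<in>{0..<s}. real s - real t) = (\<Prod>t\<in>{0..<s}. real (Suc t))"
    by (subst prod.atLeastLessThan_rev) (auto intro!: prod.cong simp: of_nat_diff)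
  then have "(\<Prod>t\<in>{0..<s}. (real s - real t) * (real t + 1)) = fact s * fact s"
    by (simp add: prod.distrib fact_prod_Suc add.commute)
  then have "(\<Prod>t\<in>{0..<s}. sqrt ((real s - real t) * (real t + 1))) = fact s"
    by (simp add: real_sqrt_prod[symmetric])
  then show ?thesis
    unfolding J_plus_coeff_def by (simp flip: of_real_prod)
qed

lemma mat_trace_Ot_Xt:
  assumes "i \<in> bstrings n" "j \<in> bstrings n"
  shows "mat_trace (mat_prod_list (s+1) (map2 (Ot s) i j) * Xt s) = lowering_entry s i j"
proof -
  have "mat_trace (mat_prod_list (s+1) (map2 (Ot s) i j) * Xt s) = mat_prod_list (s+1) (map2 (Ot s) i j) $$ (s, 0)"
    by (rule mat_trace_mult_matrix_unit[OF mat_prod_list_Ot_carrier]) (auto simp: Xt_def)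
  also have "\<dots> = lowering_entry s i j"
  proof -
    have ij: "length i = length j" "set i \<subseteq> {0,1}" "set j \<subseteq> {0,1}"
      using assms by (auto simp: bstrings_def)
    show ?thesis
      unfolding mat_prod_list_Ot[OF ij] lowering_entry_def
      by (simp add: J_plus_pow_def J_plus_coeff_0_self)
  qed
  finally show ?thesis .
qed

lemma index_mult_mat_2:
  assumes "A \<in> carrier_mat 2 2" "M \<in> carrier_mat 2 2" "a < 2" "b < 2"
  shows "(A * M) $$ (a,b) = A $$ (a,0) * M $$ (0,b) + A $$ (a,1) * M $$ (1,b)"
  using assms by (simp add: scalar_prod_def numeral_2_eq_2)

lemma index_A_mag:
  "A_mag n 0 $$ (0,0) = 0" "A_mag n 0 $$ (0,1) = 0" "A_mag n 0 $$ (1,0) = 1" "A_mag n 0 $$ (1,1) = 0"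
  "A_mag n 1 $$ (0,0) = 1" "A_mag n 1 $$ (0,1) = 0" "A_mag n 1 $$ (1,0) = 0" "A_mag n 1 $$ (1,1) = omega n"
  by (simp_all add: A_mag_def)

lemma A_mag_carrier: "A_mag n k \<in> carrier_mat 2 2"
  unfolding A_mag_def by simp

lemma mat_prod_list_A_mag_carrier: "mat_prod_list 2 (map (A_mag n) j) \<in> carrier_mat 2 2"
  by (auto intro!: mat_prod_list_carrier simp: A_mag_carrier)

lemma index_mat_prod_list_A_mag:
  assumes "set j \<subseteq> {0,1}"
  shows "mat_prod_list 2 (map (A_mag n) j) $$ (0,0) = (if j = replicate (length j) 1 then 1 else 0) \<and>
         mat_prod_list 2 (map (A_mag n) j) $$ (0,1) = 0 \<and>
         mat_prod_list 2 (map (A_mag n) j) $$ (1,0) =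
           (\<Sum>r<length j. if j = (replicate (length j) 1)[r := 0] then omega n ^ r else 0) \<and>
         mat_prod_list 2 (map (A_mag n) j) $$ (1,1) =
           (if j = replicate (length j) 1 then omega n ^ length j else 0)"
  using assms
proof (induction j)
  case (Cons x j)
  have x: "x = 0 \<or> x = 1" using Cons.prems by auto
  have IH: "mat_prod_list 2 (map (A_mag n) j) $$ (0,0) = (if j = replicate (length j) 1 then 1 else 0)"
    "mat_prod_list 2 (map (A_mag n) j) $$ (0,1) = 0"
    "mat_prod_list 2 (map (A_mag n) j) $$ (1,0) =
      (\<Sum>r<length j. if j = (replicate (length j) 1)[r := 0] then omega n ^ r else 0)"
    "mat_prod_list 2 (map (A_mag n) j) $$ (1,1) = (if j = replicate (length j) 1 then omega n ^ length j else 0)"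
    using Cons by auto
  have lt: "(0::nat) < 2" "(1::nat) < 2" by simp_all
  note expand = list.map mat_prod_list.simps index_mult_mat_2[OF A_mag_carrier mat_prod_list_A_mag_carrier] lt
  from x show ?case
  proof
    assume x0: "x = 0"
    have "(\<Sum>r<length (0#j). if 0#j = (replicate (length (0#j)) 1)[r := 0] then omega n ^ r else 0)
       = (if j = replicate (length j) 1 then 1 else 0)"
      unfolding length_Cons by (subst sum.lessThan_Suc_shift) simp
    then show ?case unfolding x0 by (simp only: expand index_A_mag IH) simp
  next
    assume x1: "x = 1"
    have "(\<Sum>r<length (1#j). if 1#j = (replicate (length (1#j)) 1)[r := 0] then omega n ^ r else 0)
       = omega n * (\<Sum>r<length j. if j = (replicate (length j) 1)[r := 0] then omega n ^ r else 0)"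
      unfolding length_Cons by (subst sum.lessThan_Suc_shift) (auto simp: sum_distrib_left intro!: sum.cong)
    then show ?case unfolding x1 by (simp only: expand index_A_mag IH) simp
  qed
qed simp

lemma mps_magnon_eq:
  assumes "set j \<subseteq> {0,1}"
  shows "mps 2 (A_mag n) X_mag j =
    (\<Sum>r<length j. if j = (replicate (length j) 1)[r := 0] then omega n ^ r else 0)"
proof -
  have "mps 2 (A_mag n) X_mag j = mat_prod_list 2 (map (A_mag n) j) $$ (1,0)"
    unfolding mps_def
    by (rule mat_trace_mult_matrix_unit[OF mat_prod_list_A_mag_carrier]) (auto simp: X_mag_def)
  then show ?thesis using index_mat_prod_list_A_mag[OF assms] by simp
qed

lemma cnj_omega_mult_omega: "cnj (omega n) * omega n = 1"
proof -
  have "norm (omega n) = 1" unfolding omega_def by (simp add: norm_exp_eq_Re)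
  then show ?thesis using complex_norm_square[of "omega n"] by (simp add: mult.commute)
qed

lemma sigma_minus_apply_all_ones:
  assumes j: "j \<in> bstrings n" and r: "r < n"
  shows "op_apply n (sigma_minus (Suc r)) (all_ones n) j = (if j = (replicate n 1)[r := 0] then 1 else 0)"
proof -
  have ones: "replicate n 1 \<in> bstrings n" unfolding bstrings_def by auto
  have iff: "replicate n 1 = j[r := 1] \<and> j!r = 0 \<longleftrightarrow> j = (replicate n 1)[r := 0]"
  proof
    assume h: "replicate n 1 = j[r := 1] \<and> j!r = 0"
    then have "(replicate n 1)[r := 0] = j[r := 0]" by simp
    also have "\<dots> = j" using h by (metis list_update_id)
    finally show "j = (replicate n 1)[r := 0]" by simp
  next
    assume "j = (replicate n 1)[r := 0]"
    moreover have "(replicate n (1::nat))[r := 1] = replicate n 1" using r by (simp add: list_update_same_conv)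
    ultimately show "replicate n 1 = j[r := 1] \<and> j!r = 0" using r by simp
  qed
  have "op_apply n (sigma_minus (Suc r)) (all_ones n) j = sigma_minus (Suc r) j (replicate n 1)"
    unfolding op_apply_def all_ones_def using ones by (simp add: if_distrib cong: if_cong)
  also have "\<dots> = (if replicate n 1 = j[r := 1] \<and> j!r = 0 then 1 else 0)"
    by (rule sigma_minus_Suc[OF j ones r])
  finally show ?thesis by (simp only: iff)
qed

lemma magnon_eq_mps:
  assumes j: "j \<in> bstrings n"
  shows "magnon n j = mps 2 (A_mag n) X_mag j"
proof -
  have "magnon n j = cnj (omega n) * (\<Sum>r<n. omega n ^ Suc r * (if j = (replicate n 1)[r := 0] then 1 else 0))"
    unfolding magnon_def using j by (simp add: sum.atLeast1_atMost_eq sigma_minus_apply_all_ones)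
  also have "\<dots> = (\<Sum>r<n. if j = (replicate n 1)[r := 0] then omega n ^ r else 0)"
    by (subst sum_distrib_left, rule sum.cong) (auto simp: mult.assoc[symmetric] cnj_omega_mult_omega)
  also have "\<dots> = mps 2 (A_mag n) X_mag j"
    using j mps_magnon_eq[of j n] by (simp add: bstrings_def)
  finally show ?thesis .
qed

lemma Xt_carrier: "Xt s \<in> carrier_mat (s+1) (s+1)"
  unfolding Xt_def by simp

lemma X_mag_carrier: "X_mag \<in> carrier_mat 2 2"
  unfolding X_mag_def by simp

theorem lemma17:
  fixes n s :: nat
  assumes "s \<in> {1..n}"
  shows "(\<forall>i \<in> bstrings n. \<forall>j \<in> bstrings n.
            op_pow n (S_minus n) s i j =
            mat_trace (mat_prod_list (s+1) (map2 (Ot s) i j) * Xt s))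
       \<and> (\<forall>i \<in> bstrings n.
            op_apply n (op_pow n (S_minus n) s) (magnon n) i =
            mps (2 * (s+1)) (diamond (Ot s) (A_mag n)) (kron (Xt s) X_mag) i)"
proof (intro conjI ballI)
  fix i j assume "i \<in> bstrings n" "j \<in> bstrings n"
  then show "op_pow n (S_minus n) s i j = mat_trace (mat_prod_list (s+1) (map2 (Ot s) i j) * Xt s)"
    by (simp only: op_pow_S_minus mat_trace_Ot_Xt)
next
  fix i assume i: "i \<in> bstrings n"
  have "op_apply n (op_pow n (S_minus n) s) (magnon n) i =
      (\<Sum>j\<in>bstrings n. mat_trace (mat_prod_list (s+1) (map2 (Ot s) i j) * Xt s) *
        mat_trace (mat_prod_list 2 (map (A_mag n) j) * X_mag))"
    unfolding op_apply_def using i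
    by (intro sum.cong) (simp_all only: op_pow_S_minus mat_trace_Ot_Xt magnon_eq_mps mps_def)
  also have "\<dots> = mps ((s+1) * 2) (diamond (Ot s) (A_mag n)) (kron (Xt s) X_mag) i"
    unfolding mps_def
    using mat_trace_prod_diamond[where Op = "Ot s" and A = "A_mag n", OF Ot_carrier A_mag_carrier
        Xt_carrier X_mag_carrier] length_bstrings[OF i]
    by simp
  finally show "op_apply n (op_pow n (S_minus n) s) (magnon n) i =
      mps (2 * (s+1)) (diamond (Ot s) (A_mag n)) (kron (Xt s) X_mag) i"
    by (simp only: mult.commute)
qed

end
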